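(* Let $G$ be a connected bipartite graph with vertex set $\{u_1,\dots,u_n\}$ ($n\ge2$), let $H$ be a non-empty graph, and let $\mathcal{H}=\{H_1,\dots,H_n\}$ be a family of graphs such that $\mathcal{H}-\Phi=\{H\}$, i.e. exactly one graph of the family has an edge and it is $H$, all others being edgeless. Then $\dim_l(G\circ\mathcal{H})=\operatorname{adim}_l(H)+1$ if $H\in\mathcal{G}$, and $\dim_l(G\circ\mathcal{H})=\operatorname{adim}_l(H)$ otherwise.
   Context: All graphs are finite and simple with at least one vertex; a non-empty graph is one with at least one edge; $\Phi$ is the class of edgeless graphs. $d_G$ is shortest-path distance ($+\infty$ between components), $d_{G,2}=\min\{d_G,2\}$; $s$ distinguishes $x,y$ w.r.t. $d$ if $d(s,x)\ne d(s,y)$. $\dim_l(G)$: minimum size of $S\subseteq V(G)$ such that any two adjacent vertices are distinguished w.r.t. $d_G$ by some vertex of $S$. $\operatorname{adim}_l(H)$: minimum size of $S\subseteq V(H)$ such that any two adjacent vertices are distinguished w.r.t. $d_{H,2}$ by some vertex of $S$; minimum such sets are local adjacency bases. $\mathcal{G}$: class of graphs $H$ such that every local adjacency basis $B$ of $H$ satisfies $B\subseteq N_H(v)$ for some $v\in V(H)$. Lexicographic product $G\circ\mathcal{H}$: vertex set $\bigcup_i\{u_i\}\times V(H_i)$, $(u_i,v)\sim(u_j,w)$ iff $u_iu_j\in E(G)$, or $i=j$ and $vw\in E(H_i)$. *)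

theory Defs
  imports Main "HOL-Library.Extended_Nat"
begin

definition is_graph :: "'a set \<Rightarrow> ('a \<times> 'a) set \<Rightarrow> bool" where
  "is_graph V E \<longleftrightarrow> finite V \<and> V \<noteq> {} \<and> E \<subseteq> V \<times> V \<and> sym E \<and> irrefl E"

inductive walk :: "('a \<times> 'a) set \<Rightarrow> nat \<Rightarrow> 'a \<Rightarrow> 'a \<Rightarrow> bool" for E where
  walk_nil: "walk E 0 x x"
| walk_cons: "(x, y) \<in> E \<Longrightarrow> walk E n y z \<Longrightarrow> walk E (Suc n) x z"

definition gdist :: "('a \<times> 'a) set \<Rightarrow> 'a \<Rightarrow> 'a \<Rightarrow> enat" where
  "gdist E x y = (if \<exists>n. walk E n x y then enat (LEAST n. walk E n x y) else \<infinity>)"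

definition gdist2 :: "('a \<times> 'a) set \<Rightarrow> 'a \<Rightarrow> 'a \<Rightarrow> enat" where
  "gdist2 E x y = min (gdist E x y) 2"

definition connected_graph :: "'a set \<Rightarrow> ('a \<times> 'a) set \<Rightarrow> bool" where
  "connected_graph V E \<longleftrightarrow> (\<forall>x\<in>V. \<forall>y\<in>V. gdist E x y \<noteq> \<infinity>)"

definition bipartite :: "'a set \<Rightarrow> ('a \<times> 'a) set \<Rightarrow> bool" where
  "bipartite V E \<longleftrightarrow> (\<exists>A. \<forall>(x, y)\<in>E. (x \<in> A \<longleftrightarrow> y \<notin> A))"

definition local_resolving :: "'a set \<Rightarrow> ('a \<times> 'a) set \<Rightarrow> 'a set \<Rightarrow> bool" where
  "local_resolving V E S \<longleftrightarrow> S \<subseteq> V \<and>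
     (\<forall>x y. (x, y) \<in> E \<longrightarrow> (\<exists>s\<in>S. gdist E s x \<noteq> gdist E s y))"

definition dim_l :: "'a set \<Rightarrow> ('a \<times> 'a) set \<Rightarrow> nat" where
  "dim_l V E = (LEAST k. \<exists>S. local_resolving V E S \<and> card S = k)"

definition local_adj_resolving :: "'a set \<Rightarrow> ('a \<times> 'a) set \<Rightarrow> 'a set \<Rightarrow> bool" where
  "local_adj_resolving V E S \<longleftrightarrow> S \<subseteq> V \<and>
     (\<forall>x y. (x, y) \<in> E \<longrightarrow> (\<exists>s\<in>S. gdist2 E s x \<noteq> gdist2 E s y))"

definition adim_l :: "'a set \<Rightarrow> ('a \<times> 'a) set \<Rightarrow> nat" where
  "adim_l V E = (LEAST k. \<exists>S. local_adj_resolving V E S \<and> card S = k)"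

definition local_adj_basis :: "'a set \<Rightarrow> ('a \<times> 'a) set \<Rightarrow> 'a set \<Rightarrow> bool" where
  "local_adj_basis V E B \<longleftrightarrow> local_adj_resolving V E B \<and> card B = adim_l V E"

definition class_G :: "'a set \<Rightarrow> ('a \<times> 'a) set \<Rightarrow> bool" where
  "class_G V E \<longleftrightarrow> (\<forall>B. local_adj_basis V E B \<longrightarrow> (\<exists>v\<in>V. B \<subseteq> {w. (v, w) \<in> E}))"

definition lex_V :: "'a set \<Rightarrow> ('a \<Rightarrow> 'b set) \<Rightarrow> ('a \<times> 'b) set" where
  "lex_V V HV = Sigma V HV"

definition lex_E :: "'a set \<Rightarrow> ('a \<times> 'a) set \<Rightarrow> ('a \<Rightarrow> 'b set) \<Rightarrow> ('a \<Rightarrow> ('b \<times> 'b) set)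
    \<Rightarrow> (('a \<times> 'b) \<times> ('a \<times> 'b)) set" where
  "lex_E V E HV HE = {((u, v), (u', w)). (u, v) \<in> Sigma V HV \<and> (u', w) \<in> Sigma V HV \<and>
      ((u, u') \<in> E \<or> (u = u' \<and> (v, w) \<in> HE u))}"

end

theory Submission
  imports Defs
begin

text \<open>
  Let \<open>H\<close> sit over the vertex \<open>i\<close> of \<open>G\<close>. In the product, vertices in different fibres are at
  the \<open>G\<close>-distance of their fibres, and vertices of one fibre over a non-isolated vertex are at
  their \<open>d\<^sub>H\<^sub>,\<^sub>2\<close>-distance. Hence only vertices of the fibre of \<open>i\<close> can resolve an edge of \<open>H\<close>,
  and the trace on that fibre of a local metric generator is a local adjacency generator of \<open>H\<close>.
  Conversely, as \<open>G\<close> is bipartite, parity makes every vertex outside two adjacent fibres resolve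
  every edge between them. So a local adjacency basis \<open>B\<close> of \<open>H\<close>, placed in the fibre of \<open>i\<close>,
  leaves only the edges from some \<open>(i, v)\<close> to another fibre, and it resolves all of them iff
  \<open>B \<subseteq> N\<^sub>H(v)\<close> holds for no \<open>v\<close>. For \<open>H \<in> \<G>\<close> one further vertex, in a fibre adjacent to \<open>i\<close>,
  is needed and suffices.
\<close>

subsection \<open>Walks and distances\<close>

lemma walk_0_iff: "walk R 0 x y \<longleftrightarrow> x = y"
  by (auto elim: walk.cases intro: walk.intros)

lemma walk_Suc_iff: "walk R (Suc n) x y \<longleftrightarrow> (\<exists>z. (x, z) \<in> R \<and> walk R n z y)"
  by (auto elim: walk.cases intro: walk.intros)

lemma walk_1_iff: "walk R (Suc 0) x y \<longleftrightarrow> (x, y) \<in> R"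
  by (simp add: walk_Suc_iff walk_0_iff)

lemma walk_bipartite_parity:
  assumes "\<forall>(x, y)\<in>R. x \<in> A \<longleftrightarrow> y \<notin> A" and "walk R n x y"
  shows "(x \<in> A \<longleftrightarrow> y \<in> A) \<longleftrightarrow> even n"
  using assms(2) by induction (use assms(1) in auto)

lemma gdist_le_enat_iff: "gdist R x y \<le> enat n \<longleftrightarrow> (\<exists>m\<le>n. walk R m x y)"
proof (cases "\<exists>k. walk R k x y")
  case True
  have "walk R (LEAST k. walk R k x y) x y"
    using True by (rule LeastI_ex)
  with True show ?thesis
    by (auto simp: gdist_def intro: Least_le order_trans)
qed (auto simp: gdist_def)

lemma gdist_eq_enat_imp_walk: "gdist R x y = enat k \<Longrightarrow> walk R k x y"
  unfolding gdist_def by (metis LeastI_ex enat.inject not_infinity_eq)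

lemma enat_eqI:
  assumes "\<And>n. (a::enat) \<le> enat n \<longleftrightarrow> b \<le> enat n"
  shows "a = b"
proof (cases a)
  case (enat k)
  moreover obtain l where "b = enat l"
    using assms[of k] enat enat_ile by auto
  ultimately show ?thesis
    using assms[of k] assms[of l] by simp
next
  case infinity
  show ?thesis
  proof (cases b)
    case (enat l)
    then show ?thesis
      using assms[of l] infinity by simp
  qed (use infinity in simp)
qed

lemma gdist_eqI:
  assumes "\<And>n. (\<exists>m\<le>n. walk R m x y) \<longleftrightarrow> (\<exists>m\<le>n. walk R' m x' y')"
  shows "gdist R x y = gdist R' x' y'"
  using assms by (intro enat_eqI) (simp add: gdist_le_enat_iff)

lemma gdist_eq_0_iff: "gdist R x y = 0 \<longleftrightarrow> x = y"
  using gdist_le_enat_iff[of R x y 0] by (simp add: walk_0_iff flip: zero_enat_def)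

lemma gdist_self [simp]: "gdist R x x = 0"
  by (simp add: gdist_eq_0_iff)

lemma gdist_le_1_iff: "gdist R x y \<le> 1 \<longleftrightarrow> x = y \<or> (x, y) \<in> R"
  using gdist_le_enat_iff[of R x y 1]
  by (auto simp: one_enat_def le_Suc_eq walk_0_iff walk_1_iff)

lemma gdist_eq_1_iff: "gdist R x y = 1 \<longleftrightarrow> x \<noteq> y \<and> (x, y) \<in> R"
proof -
  have "d = 1 \<longleftrightarrow> d \<le> 1 \<and> d \<noteq> 0" for d :: enat
    by (cases d) (auto simp: one_enat_def zero_enat_def)
  then show ?thesis
    by (auto simp: gdist_le_1_iff gdist_eq_0_iff)
qed

lemma gdist_eq_2:
  assumes "x \<noteq> y" "(x, y) \<notin> R" "(x, z) \<in> R" "(z, y) \<in> R"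
  shows "gdist R x y = 2"
proof -
  have "walk R 2 x y"
    using assms(3,4) by (auto simp: numeral_2_eq_2 walk_Suc_iff walk_0_iff)
  then have "gdist R x y \<le> 2"
    using gdist_le_enat_iff[of R x y 2] by (auto simp: numeral_eq_enat)
  moreover have "\<not> gdist R x y \<le> 1"
    using assms(1,2) by (simp add: gdist_le_1_iff)
  ultimately show ?thesis
    by (cases "gdist R x y") (auto simp: one_enat_def numeral_eq_enat)
qed

lemma gdist2_eq: "gdist2 R x y = (if x = y then 0 else if (x, y) \<in> R then 1 else 2)"
proof -
  have "min d 2 = 2" if "\<not> d \<le> 1" for d :: enat
    using that by (cases d) (auto simp: one_enat_def numeral_eq_enat)
  moreover have "gdist R x y = 1" if "x \<noteq> y" "(x, y) \<in> R"
    using that by (simp add: gdist_eq_1_iff)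
  ultimately show ?thesis
    by (auto simp: gdist2_def gdist_le_1_iff)
qed

lemma gdist_ne_if_bipartite:
  assumes "bipartite V E" "gdist E a u \<noteq> \<infinity>" "(u, u') \<in> E"
  shows "gdist E a u \<noteq> gdist E a u'"
proof
  assume eq: "gdist E a u = gdist E a u'"
  obtain A where A: "\<forall>(x, y)\<in>E. x \<in> A \<longleftrightarrow> y \<notin> A"
    using assms(1) by (auto simp: bipartite_def)
  obtain k where k: "gdist E a u = enat k"
    using assms(2) by auto
  have "walk E k a u" "walk E k a u'"
    using k eq by (simp_all add: gdist_eq_enat_imp_walk)
  then have "(a \<in> A \<longleftrightarrow> u \<in> A) \<longleftrightarrow> (a \<in> A \<longleftrightarrow> u' \<in> A)"
    using walk_bipartite_parity[OF A] by blast
  moreover have "u \<in> A \<longleftrightarrow> u' \<notin> A"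
    using A assms(3) by blast
  ultimately show False
    by blast
qed

lemma connected_graph_has_neighbour:
  assumes "is_graph V E" "connected_graph V E" "card V \<ge> 2" "i \<in> V"
  obtains c where "(i, c) \<in> E"
proof -
  have "\<not> V \<subseteq> {i}"
    using assms(3) card_mono[of "{i}" V] by fastforce
  then obtain j where j: "j \<in> V" "j \<noteq> i"
    by blast
  then have "gdist E i j \<noteq> \<infinity>"
    using assms(2,4) by (simp add: connected_graph_def)
  then obtain n where "walk E n i j"
    by (metis gdist_def)
  with j(2) obtain m where "walk E (Suc m) i j"
    by (cases n) (auto simp: walk_0_iff)
  then show thesis
    using that by (auto simp: walk_Suc_iff)
qed

lemma adim_l_le_card: "local_adj_resolving V E B \<Longrightarrow> adim_l V E \<le> card B"
  unfolding adim_l_def by (rule Least_le) blast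

lemma local_adj_resolving_nonempty: "local_adj_resolving V E B \<Longrightarrow> E \<noteq> {} \<Longrightarrow> B \<noteq> {}"
  unfolding local_adj_resolving_def by fast

lemma local_adj_basis_exists:
  assumes "is_graph V E"
  obtains B where "local_adj_basis V E B"
proof -
  have "local_adj_resolving V E V"
    using assms by (fastforce simp: local_adj_resolving_def gdist2_eq is_graph_def irrefl_def)
  then have "\<exists>B. local_adj_resolving V E B \<and> card B = adim_l V E"
    unfolding adim_l_def
    using LeastI_ex[of "\<lambda>k. \<exists>B. local_adj_resolving V E B \<and> card B = k"] by blast
  then show thesis
    using that by (auto simp: local_adj_basis_def)
qed

lemma dim_l_eqI:
  assumes "local_resolving V E S" "card S = k" "\<And>S. local_resolving V E S \<Longrightarrow> k \<le> card S"
  shows "dim_l V E = k"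
  unfolding dim_l_def
proof (rule Least_equality)
  show "\<exists>S. local_resolving V E S \<and> card S = k"
    using assms(1,2) by blast
next
  show "k \<le> n" if "\<exists>S. local_resolving V E S \<and> card S = n" for n
    using that assms(3) by blast
qed

subsection \<open>Distances in the lexicographic product\<close>

lemma lex_E_iff:
  "((u, v), (u', w)) \<in> lex_E V E HV HE \<longleftrightarrow>
     u \<in> V \<and> v \<in> HV u \<and> u' \<in> V \<and> w \<in> HV u' \<and> ((u, u') \<in> E \<or> u = u' \<and> (v, w) \<in> HE u)"
  by (auto simp: lex_E_def)

lemma walk_lex_E_project:
  "walk (lex_E V E HV HE) n p q \<Longrightarrow> \<exists>m\<le>n. walk E m (fst p) (fst q)"
proof (induction rule: walk.induct)
  case (walk_nil x)
  have "walk E 0 (fst x) (fst x)"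
    by (rule walk.walk_nil)
  then show ?case
    by blast
next
  case (walk_cons x y n z)
  then obtain m where m: "m \<le> n" "walk E m (fst y) (fst z)"
    by blast
  have "(fst x, fst y) \<in> E \<or> fst x = fst y"
    using walk_cons(1) unfolding lex_E_def by auto
  then show ?case
  proof
    assume "(fst x, fst y) \<in> E"
    then have "walk E (Suc m) (fst x) (fst z)"
      using m(2) by (rule walk.walk_cons)
    then show ?case
      using m(1) by auto
  next
    assume "fst x = fst y"
    then have "walk E m (fst x) (fst z)"
      using m(2) by simp
    then show ?case
      using le_SucI[OF m(1)] by blast
  qed
qed

lemma walk_lex_E_lift:
  assumes "walk E m a b" "0 < m" "E \<subseteq> V \<times> V" "\<forall>u\<in>V. HV u \<noteq> {}" "x \<in> HV a" "y \<in> HV b"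
  shows "walk (lex_E V E HV HE) m (a, x) (b, y)"
  using assms(1,2,5,6)
proof (induction arbitrary: x rule: walk.induct)
  case (walk_cons a a' n b)
  have V: "a \<in> V" "a' \<in> V"
    using walk_cons(1) assms(3) by auto
  show ?case
  proof (cases n)
    case 0
    with walk_cons V show ?thesis
      by (auto simp: walk_1_iff walk_0_iff lex_E_iff)
  next
    case (Suc k)
    obtain x' where x': "x' \<in> HV a'"
      using assms(4) V by blast
    have "((a, x), (a', x')) \<in> lex_E V E HV HE"
      using walk_cons V x' by (simp add: lex_E_iff)
    moreover have "walk (lex_E V E HV HE) n (a', x') (b, y)"
      using walk_cons Suc x' by simp
    ultimately show ?thesis
      by (rule walk.walk_cons)
  qed
qed simp

lemma gdist_lex_E_distinct_fibres:
  assumes "E \<subseteq> V \<times> V" "\<forall>u\<in>V. HV u \<noteq> {}" "a \<noteq> b" "x \<in> HV a" "y \<in> HV b"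
  shows "gdist (lex_E V E HV HE) (a, x) (b, y) = gdist E a b"
proof (rule gdist_eqI, rule iffI)
  fix n
  assume "\<exists>m\<le>n. walk (lex_E V E HV HE) m (a, x) (b, y)"
  then obtain m where "m \<le> n" "walk (lex_E V E HV HE) m (a, x) (b, y)"
    by blast
  then obtain m' where "m' \<le> m" "walk E m' a b"
    using walk_lex_E_project[of V E HV HE m "(a, x)" "(b, y)"] by auto
  moreover have "m' \<le> n"
    using \<open>m' \<le> m\<close> \<open>m \<le> n\<close> by simp
  ultimately show "\<exists>m\<le>n. walk E m a b"
    by blast
next
  fix n
  assume "\<exists>m\<le>n. walk E m a b"
  then obtain m where "m \<le> n" "walk E m a b"
    by blast
  moreover have "m \<noteq> 0"
    using \<open>walk E m a b\<close> assms(3) by (metis walk_0_iff)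
  ultimately have "walk (lex_E V E HV HE) m (a, x) (b, y)"
    using walk_lex_E_lift[OF _ _ assms(1,2) assms(4,5)] by simp
  then show "\<exists>m\<le>n. walk (lex_E V E HV HE) m (a, x) (b, y)"
    using \<open>m \<le> n\<close> by blast
qed

text \<open>A neighbour \<open>c\<close> of \<open>u\<close> provides a common neighbour of any two vertices of the fibre over \<open>u\<close>.\<close>

lemma gdist_lex_E_same_fibre:
  assumes "sym E" "irrefl E" "(u, c) \<in> E" "u \<in> V" "c \<in> V" "HV c \<noteq> {}" "v \<in> HV u" "w \<in> HV u"
  shows "gdist (lex_E V E HV HE) (u, v) (u, w) = gdist2 (HE u) v w"
proof -
  have uc: "(c, u) \<in> E" "(u, u) \<notin> E"
    using assms(1-3) by (auto simp: sym_def irrefl_def)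
  obtain z where z: "z \<in> HV c"
    using assms(6) by blast
  have edge_iff: "((u, v), (u, w)) \<in> lex_E V E HV HE \<longleftrightarrow> (v, w) \<in> HE u"
    using uc assms(4,7,8) by (simp add: lex_E_iff)
  show ?thesis
  proof (cases "v = w \<or> (v, w) \<in> HE u")
    case True
    then show ?thesis
      using edge_iff by (auto simp: gdist2_eq gdist_eq_1_iff)
  next
    case False
    have "((u, v), (c, z)) \<in> lex_E V E HV HE" "((c, z), (u, w)) \<in> lex_E V E HV HE"
      using uc z assms(3-8) by (simp_all add: lex_E_iff)
    then have "gdist (lex_E V E HV HE) (u, v) (u, w) = 2"
      using False edge_iff by (intro gdist_eq_2) auto
    then show ?thesis
      using False by (simp add: gdist2_eq)
  qed
qed

subsection \<open>One factor with edges over a bipartite graph\<close>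

locale lex_single_nonedgeless_factor =
  fixes V :: "'a set" and E :: "('a \<times> 'a) set"
    and HV :: "'a \<Rightarrow> 'b set" and HE :: "'a \<Rightarrow> ('b \<times> 'b) set" and i c :: 'a
  assumes graph: "is_graph V E" and connected: "connected_graph V E"
    and bipartite: "bipartite V E"
    and factor_graphs: "\<forall>u\<in>V. is_graph (HV u) (HE u)"
    and i_in_V: "i \<in> V" and edgeless_elsewhere: "\<forall>j\<in>V. j \<noteq> i \<longrightarrow> HE j = {}"
    and nonedgeless: "HE i \<noteq> {}" and neighbour: "(i, c) \<in> E"
begin

abbreviation "PV \<equiv> lex_V V HV"
abbreviation "PE \<equiv> lex_E V E HV HE"

lemma E_sub: "E \<subseteq> V \<times> V" and sym_E: "sym E" and irrefl_E: "irrefl E"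
  using graph by (auto simp: is_graph_def)

lemma HV_nonempty: "\<forall>u\<in>V. HV u \<noteq> {}"
  using factor_graphs by (auto simp: is_graph_def)

lemma HE_i_sub: "HE i \<subseteq> HV i \<times> HV i" and sym_HE_i: "sym (HE i)" and irrefl_HE_i: "irrefl (HE i)"
  using factor_graphs i_in_V by (auto simp: is_graph_def)

lemma c_in_V: "c \<in> V" and c_ne_i: "c \<noteq> i" and neighbour': "(c, i) \<in> E"
  using neighbour E_sub sym_E irrefl_E by (auto simp: sym_def irrefl_def)

lemma finite_PV: "finite PV"
  using graph factor_graphs by (auto simp: lex_V_def is_graph_def)

lemma gdist_PE_distinct_fibres:
  "a \<noteq> b \<Longrightarrow> x \<in> HV a \<Longrightarrow> y \<in> HV b \<Longrightarrow> gdist PE (a, x) (b, y) = gdist E a b"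
  by (rule gdist_lex_E_distinct_fibres[OF E_sub HV_nonempty])

lemma gdist_PE_fibre_i:
  "b \<in> HV i \<Longrightarrow> v \<in> HV i \<Longrightarrow> gdist PE (i, b) (i, v) = gdist2 (HE i) b v"
  using HV_nonempty c_in_V
  by (intro gdist_lex_E_same_fibre[OF sym_E irrefl_E neighbour i_in_V c_in_V]) auto

lemma gdist_ic: "gdist E i c = 1" "gdist E c i = 1"
  using neighbour neighbour' c_ne_i by (auto simp: gdist_eq_1_iff)

lemma gdist_ne_adjacent:
  assumes "a \<in> V" "(u, u') \<in> E"
  shows "gdist E a u \<noteq> gdist E a u'"
proof (rule gdist_ne_if_bipartite[OF bipartite _ assms(2)])
  show "gdist E a u \<noteq> \<infinity>"
    using connected assms E_sub by (auto simp: connected_graph_def)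
qed

lemma fibre_trace_local_adj_resolving:
  assumes S: "local_resolving PV PE S"
  shows "local_adj_resolving (HV i) (HE i) (Pair i -` S)"
  unfolding local_adj_resolving_def
proof (intro conjI allI impI)
  show "Pair i -` S \<subseteq> HV i"
    using S by (auto simp: local_resolving_def lex_V_def)
next
  fix x y
  assume xy: "(x, y) \<in> HE i"
  then have xy_in: "x \<in> HV i" "y \<in> HV i"
    using HE_i_sub by auto
  then have "((i, x), (i, y)) \<in> PE"
    using xy i_in_V by (simp add: lex_E_iff)
  then obtain a b where s: "(a, b) \<in> S" "gdist PE (a, b) (i, x) \<noteq> gdist PE (a, b) (i, y)"
    using S unfolding local_resolving_def by fast
  moreover have ab: "a \<in> V" "b \<in> HV a"
    using s(1) S by (auto simp: local_resolving_def lex_V_def)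
  \<comment> \<open>a vertex outside the fibre of \<open>i\<close> is equidistant from the whole fibre\<close>
  ultimately have "a = i"
    using gdist_PE_distinct_fibres xy_in by fastforce
  then show "\<exists>s\<in>Pair i -` S. gdist2 (HE i) s x \<noteq> gdist2 (HE i) s y"
    using s ab xy_in gdist_PE_fibre_i by auto
qed

lemma adim_l_le_card_local_resolving:
  assumes "local_resolving PV PE S"
  shows "adim_l (HV i) (HE i) \<le> card S"
proof -
  have "finite S"
    using assms finite_PV finite_subset by (auto simp: local_resolving_def)
  then have "card (Pair i -` S) \<le> card S"
    using card_vimage_inj_on_le[of "Pair i" UNIV S] by (simp add: inj_on_def)
  then show ?thesis
    using adim_l_le_card[OF fibre_trace_local_adj_resolving[OF assms]] by linarith
qed

lemma gdist_PE_fibre_i_ne_edge: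
  assumes "b \<in> HV i" "(u, u') \<in> E" "u \<noteq> i" "u' \<noteq> i" "v \<in> HV u" "w \<in> HV u'"
  shows "gdist PE (i, b) (u, v) \<noteq> gdist PE (i, b) (u', w)"
  using assms gdist_PE_distinct_fibres gdist_ne_adjacent[OF i_in_V assms(2)] by simp

lemma local_resolving_if_resolves_edges_from_fibre_i:
  assumes B: "local_adj_resolving (HV i) (HE i) B" and BS: "Pair i ` B \<subseteq> S" and SPV: "S \<subseteq> PV"
    and resolves: "\<And>v u' w. v \<in> HV i \<Longrightarrow> (i, u') \<in> E \<Longrightarrow> w \<in> HV u' \<Longrightarrow>
        \<exists>s\<in>S. gdist PE s (i, v) \<noteq> gdist PE s (u', w)"
  shows "local_resolving PV PE S"
  unfolding local_resolving_def
proof (intro conjI allI impI SPV)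
  fix p q
  assume edge: "(p, q) \<in> PE"
  obtain u v u' w where pq: "p = (u, v)" "q = (u', w)"
    by (cases p, cases q)
  have in_PV: "u \<in> V" "v \<in> HV u" "u' \<in> V" "w \<in> HV u'"
    using edge unfolding pq lex_E_iff by simp_all
  have B_sub: "B \<subseteq> HV i"
    using B by (simp add: local_adj_resolving_def)
  consider "(u, u') \<in> E" "u = i" | "(u, u') \<in> E" "u' = i" | "(u, u') \<in> E" "u \<noteq> i" "u' \<noteq> i"
    | "u = u'" "(v, w) \<in> HE u"
    using edge unfolding pq lex_E_iff by blast
  then show "\<exists>s\<in>S. gdist PE s p \<noteq> gdist PE s q"
  proof cases
    case 1
    then show ?thesis
      using resolves[of v u' w] in_PV pq by simp
  next
    case 2
    then have "(u', u) \<in> E"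
      using sym_E by (auto simp: sym_def)
    then obtain s where "s \<in> S" "gdist PE s q \<noteq> gdist PE s p"
      using resolves[of w u v] 2 in_PV pq by auto
    then show ?thesis
      by metis
  next
    case 3
    obtain b where b: "b \<in> B"
      using local_adj_resolving_nonempty[OF B nonedgeless] by blast
    then have "gdist PE (i, b) p \<noteq> gdist PE (i, b) q"
      using gdist_PE_fibre_i_ne_edge 3 B_sub in_PV pq by auto
    then show ?thesis
      using BS b by blast
  next
    case 4
    then have "u = i"
      using edgeless_elsewhere in_PV by fastforce
    with 4 obtain b where b: "b \<in> B" "gdist2 (HE i) b v \<noteq> gdist2 (HE i) b w"
      using B unfolding local_adj_resolving_def by blast
    then have "gdist PE (i, b) p \<noteq> gdist PE (i, b) q"
      using B_sub gdist_PE_fibre_i in_PV pq \<open>u = i\<close> 4 by auto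
    then show ?thesis
      using BS b by blast
  qed
qed

lemma local_resolving_fibre_copy:
  assumes B: "local_adj_resolving (HV i) (HE i) B"
    and not_in_nbhd: "\<not> (\<exists>v\<in>HV i. B \<subseteq> {w. (v, w) \<in> HE i})"
  shows "local_resolving PV PE (Pair i ` B)"
proof (rule local_resolving_if_resolves_edges_from_fibre_i[OF B subset_refl])
  show "Pair i ` B \<subseteq> PV"
    using B i_in_V by (auto simp: local_adj_resolving_def lex_V_def)
next
  fix v u' w
  assume vw: "v \<in> HV i" "(i, u') \<in> E" "w \<in> HV u'"
  obtain b where b: "b \<in> B" "(v, b) \<notin> HE i"
    using not_in_nbhd vw by auto
  then have b': "b \<in> HV i" "(b, v) \<notin> HE i"
    using B sym_HE_i by (auto simp: local_adj_resolving_def sym_def)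
  have "i \<noteq> u'"
    using vw irrefl_E by (auto simp: irrefl_def)
  then have "gdist PE (i, b) (u', w) = 1"
    using gdist_PE_distinct_fibres b' vw by (simp add: gdist_eq_1_iff)
  moreover have "gdist PE (i, b) (i, v) \<noteq> 1"
    using gdist_PE_fibre_i b' vw by (simp add: gdist2_eq)
  ultimately show "\<exists>s\<in>Pair i ` B. gdist PE s (i, v) \<noteq> gdist PE s (u', w)"
    using b by force
qed

lemma local_resolving_fibre_copy_insert:
  assumes B: "local_adj_resolving (HV i) (HE i) B" and z: "z \<in> HV c"
  shows "local_resolving PV PE (insert (c, z) (Pair i ` B))"
proof (rule local_resolving_if_resolves_edges_from_fibre_i[OF B subset_insertI])
  show "insert (c, z) (Pair i ` B) \<subseteq> PV"
    using B i_in_V c_in_V z by (auto simp: local_adj_resolving_def lex_V_def)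
next
  fix v u' w
  assume vw: "v \<in> HV i" "(i, u') \<in> E" "w \<in> HV u'"
  have "gdist PE (c, z) (i, v) = 1"
    using gdist_PE_distinct_fibres gdist_ic c_ne_i z vw by simp
  moreover have "gdist PE (c, z) (u', w) \<noteq> 1"
  proof (cases "u' = c")
    case True
    have "HE c = {}"
      using edgeless_elsewhere c_in_V c_ne_i by blast
    moreover have "gdist PE (c, z) (c, w) = gdist2 (HE c) z w"
      using HV_nonempty i_in_V z vw True
      by (intro gdist_lex_E_same_fibre[OF sym_E irrefl_E neighbour' c_in_V i_in_V]) auto
    ultimately show ?thesis
      using True by (simp add: gdist2_eq)
  next
    case False
    then show ?thesis
      using gdist_PE_distinct_fibres gdist_ne_adjacent[OF c_in_V vw(2)] gdist_ic z vw by auto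
  qed
  ultimately show "\<exists>s\<in>insert (c, z) (Pair i ` B). gdist PE s (i, v) \<noteq> gdist PE s (u', w)"
    by force
qed

text \<open>
  A local metric generator of size \<open>adim\<^sub>l(H)\<close> would be \<open>{i} \<times> B\<close> for a local adjacency basis \<open>B\<close>;
  if \<open>B \<subseteq> N\<^sub>H(v)\<close>, no vertex of it resolves the edge from \<open>(i, v)\<close> to the fibre over \<open>c\<close>.
\<close>

lemma card_local_resolving_class_G:
  assumes G: "class_G (HV i) (HE i)" and S: "local_resolving PV PE S"
  shows "adim_l (HV i) (HE i) + 1 \<le> card S"
proof (rule ccontr)
  assume "\<not> ?thesis"
  then have card_S: "card S \<le> adim_l (HV i) (HE i)"
    by simp
  define B where "B = Pair i -` S"
  have B: "local_adj_resolving (HV i) (HE i) B"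
    unfolding B_def using fibre_trace_local_adj_resolving[OF S] .
  have finite_S: "finite S"
    using S finite_PV finite_subset by (auto simp: local_resolving_def)
  have card_B: "card (Pair i ` B) = card B"
    by (simp add: card_image inj_on_def)
  have "Pair i ` B \<subseteq> S"
    by (auto simp: B_def)
  moreover have "card S \<le> card (Pair i ` B)"
    using adim_l_le_card[OF B] card_B card_S by linarith
  ultimately have S_eq: "Pair i ` B = S"
    using finite_S card_seteq by blast
  then have "local_adj_basis (HV i) (HE i) B"
    using B adim_l_le_card[OF B] card_B card_S by (simp add: local_adj_basis_def)
  then obtain v where v: "v \<in> HV i" "B \<subseteq> {w. (v, w) \<in> HE i}"
    using G by (auto simp: class_G_def)
  obtain z where z: "z \<in> HV c"
    using HV_nonempty c_in_V by blast
  have "((i, v), (c, z)) \<in> PE"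
    using v z i_in_V c_in_V neighbour by (simp add: lex_E_iff)
  then obtain b where b: "b \<in> B" "gdist PE (i, b) (i, v) \<noteq> gdist PE (i, b) (c, z)"
    using S unfolding local_resolving_def S_eq[symmetric] by blast
  have "(b, v) \<in> HE i" "b \<noteq> v" "b \<in> HV i"
    using b v sym_HE_i irrefl_HE_i HE_i_sub by (auto simp: sym_def irrefl_def)
  then show False
    using b z gdist_PE_fibre_i[of b v] gdist_PE_distinct_fibres[of i c b z] c_ne_i gdist_ic v
    by (simp add: gdist2_eq)
qed

theorem dim_l_eq:
  "dim_l PV PE = (if class_G (HV i) (HE i) then adim_l (HV i) (HE i) + 1 else adim_l (HV i) (HE i))"
proof (cases "class_G (HV i) (HE i)")
  case True
  obtain B where B: "local_adj_resolving (HV i) (HE i) B" "card B = adim_l (HV i) (HE i)"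
    using local_adj_basis_exists factor_graphs i_in_V unfolding local_adj_basis_def by blast
  obtain z where z: "z \<in> HV c"
    using HV_nonempty c_in_V by blast
  have "finite B"
    using B(1) factor_graphs i_in_V finite_subset by (auto simp: local_adj_resolving_def is_graph_def)
  then have "card (insert (c, z) (Pair i ` B)) = adim_l (HV i) (HE i) + 1"
    using B(2) c_ne_i by (subst card_insert_disjoint) (auto simp: card_image inj_on_def)
  then have "dim_l PV PE = adim_l (HV i) (HE i) + 1"
    by (rule dim_l_eqI[OF local_resolving_fibre_copy_insert[OF B(1) z] _
          card_local_resolving_class_G[OF True]])
  with True show ?thesis
    by simp
next
  case False
  then obtain B where B: "local_adj_basis (HV i) (HE i) B" "\<not> (\<exists>v\<in>HV i. B \<subseteq> {w. (v, w) \<in> HE i})"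
    by (auto simp: class_G_def)
  then have "card (Pair i ` B) = adim_l (HV i) (HE i)"
    by (simp add: local_adj_basis_def card_image inj_on_def)
  then have "dim_l PV PE = adim_l (HV i) (HE i)"
    using B unfolding local_adj_basis_def
    by (intro dim_l_eqI[OF local_resolving_fibre_copy _ adim_l_le_card_local_resolving]) auto
  with False show ?thesis
    by simp
qed

end

theorem corollary4:
  fixes V :: "'a set" and E :: "('a \<times> 'a) set"
    and HV :: "'a \<Rightarrow> 'b set" and HE :: "'a \<Rightarrow> ('b \<times> 'b) set"
    and VH :: "'b set" and EH :: "('b \<times> 'b) set"
  assumes "is_graph V E" and "connected_graph V E" and "bipartite V E" and "card V \<ge> 2"
    and "\<forall>u\<in>V. is_graph (HV u) (HE u)"
    and "is_graph VH EH" and "EH \<noteq> {}"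
    and "\<exists>i\<in>V. HV i = VH \<and> HE i = EH \<and> (\<forall>j\<in>V. j \<noteq> i \<longrightarrow> HE j = {})"
  shows "dim_l (lex_V V HV) (lex_E V E HV HE) =
           (if class_G VH EH then adim_l VH EH + 1 else adim_l VH EH)"
proof -
  obtain i where i: "i \<in> V" "HV i = VH" "HE i = EH" "\<forall>j\<in>V. j \<noteq> i \<longrightarrow> HE j = {}"
    using assms(8) by blast
  obtain c where "(i, c) \<in> E"
    by (rule connected_graph_has_neighbour[OF assms(1,2,4) i(1)])
  with assms(1-3,5,7) i have "lex_single_nonedgeless_factor V E HV HE i c"
    by (simp add: lex_single_nonedgeless_factor_def)
  then show ?thesis
    using lex_single_nonedgeless_factor.dim_l_eq i(2,3) by fastforce
qed

end
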